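(* Let $A_1A_2A_3$ be a gyrotriangle possessing a circumgyrocircle $C(A_1A_2A_3)$ in the Einstein gyrovector space $\mathbb{R}^n_s$, $n\ge2$, and $\gamma_{ij}=\gamma_{\ominus A_i\oplus A_j}$. Let $P\in(A_1\oplus\mathrm{span}\{\ominus A_1\oplus A_2,\ominus A_1\oplus A_3\})\cap\mathbb{R}^n_s$ be given by $P=\frac{m_1\gamma_{A_1}A_1+m_2\gamma_{A_2}A_2+m_3\gamma_{A_3}A_3}{m_1\gamma_{A_1}+m_2\gamma_{A_2}+m_3\gamma_{A_3}}$. Let $P'=P'(t)\ne P$ be the point of $C(A_1A_2A_3)$ with gyrobarycentric coordinates $m_1'=-(\gamma_{23}-1)t$, $m_2'=(\gamma_{12}-1)t^2+(\gamma_{13}-1)t$, $m_3'=(\gamma_{12}-1)t+(\gamma_{13}-1)$ with respect to $\{A_1,A_2,A_3\}$, $t\in\mathbb{R}\cup\{-\infty,\infty\}$, and let $P''$ be the point lying on both $C(A_1A_2A_3)$ and the gyroline through $P$ and $P'$ that is the second intersection point (in general $P''\ne P'$). Then $$P''=\frac{m_1''\gamma_{A_1}A_1+m_2''\gamma_{A_2}A_2+m_3''\gamma_{A_3}A_3}{m_1''\gamma_{A_1}+m_2''\gamma_{A_2}+m_3''\gamma_{A_3}},$$ with $m_1''=E_1E_2$, $m_2''=E_0E_1(\gamma_{13}-1)$, $m_3''=-E_0E_2(\gamma_{12}-1)$, where $E_0=m_2-m_3t$, $E_1=m_1(\gamma_{13}-1)+m_2(\gamma_{23}-1)+m_1(\gamma_{12}-1)t$,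 $E_2=m_1(\gamma_{13}-1)+m_1(\gamma_{12}-1)t+m_3(\gamma_{23}-1)t$.
   Context: Fix $s>0$; $\mathbb{R}^n_s=\{v\in\mathbb{R}^n:\|v\|<s\}$ with Einstein addition $u\oplus v=\frac{1}{1+u\cdot v/s^2}\{u+\frac{1}{\gamma_u}v+\frac{1}{s^2}\frac{\gamma_u}{1+\gamma_u}(u\cdot v)u\}$, $\gamma_v=(1-\|v\|^2/s^2)^{-1/2}$, $\ominus v=-v$. Gyrolines are intersections of Euclidean lines with the ball. A gyrotriangle $A_1A_2A_3$ has $\ominus A_1\oplus A_2,\ominus A_1\oplus A_3$ linearly independent; its circumgyrocircle is the set of points of the gyroplane $(A_1\oplus\mathrm{span}\{\ominus A_1\oplus A_2,\ominus A_1\oplus A_3\})\cap\mathbb{R}^n_s$ at gyrodistance $R$ from the point $O$ of that gyroplane equigyrodistant (gyrodistance $\|\ominus X\oplus Y\|$) from the three vertices, $R$ being this common gyrodistance. A point with gyrobarycentric coordinates $(\mu_1:\mu_2:\mu_3)$ (homogeneous) is $\frac{\sum\mu_k\gamma_{A_k}A_k}{\sum\mu_k\gamma_{A_k}}$. *)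

theory Defs
  imports "HOL-Analysis.Analysis"
begin

definition gball :: "real \<Rightarrow> 'a::euclidean_space set" where
  "gball s = {v. norm v < s}"

definition egamma :: "real \<Rightarrow> 'a::euclidean_space \<Rightarrow> real" where
  "egamma s v = 1 / sqrt (1 - (norm v)\<^sup>2 / s\<^sup>2)"

definition eadd :: "real \<Rightarrow> 'a::euclidean_space \<Rightarrow> 'a \<Rightarrow> 'a" where
  "eadd s u v = (1 / (1 + (u \<bullet> v) / s\<^sup>2)) *\<^sub>R
      (u + (1 / egamma s u) *\<^sub>R v
         + ((1 / s\<^sup>2) * (egamma s u / (1 + egamma s u)) * (u \<bullet> v)) *\<^sub>R u)"

definition gdist :: "real \<Rightarrow> 'a::euclidean_space \<Rightarrow> 'a \<Rightarrow> real" where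
  "gdist s X Y = norm (eadd s (- X) Y)"

definition gyrotriangle :: "real \<Rightarrow> 'a::euclidean_space \<Rightarrow> 'a \<Rightarrow> 'a \<Rightarrow> bool" where
  "gyrotriangle s A1 A2 A3 \<longleftrightarrow> A1 \<in> gball s \<and> A2 \<in> gball s \<and> A3 \<in> gball s \<and>
     \<not> dependent {eadd s (- A1) A2, eadd s (- A1) A3} \<and>
     eadd s (- A1) A2 \<noteq> eadd s (- A1) A3"

definition gyroplane :: "real \<Rightarrow> 'a::euclidean_space \<Rightarrow> 'a \<Rightarrow> 'a \<Rightarrow> 'a set" where
  "gyroplane s A1 A2 A3 =
     {eadd s A1 w | w. w \<in> span {eadd s (- A1) A2, eadd s (- A1) A3}} \<inter> gball s"

definition circumcentre :: "real \<Rightarrow> 'a::euclidean_space \<Rightarrow> 'a \<Rightarrow> 'a \<Rightarrow> 'a \<Rightarrow> bool" where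
  "circumcentre s A1 A2 A3 Ctr \<longleftrightarrow> Ctr \<in> gyroplane s A1 A2 A3 \<and>
     gdist s Ctr A1 = gdist s Ctr A2 \<and> gdist s Ctr A1 = gdist s Ctr A3"

definition circumgyrocircle :: "real \<Rightarrow> 'a::euclidean_space \<Rightarrow> 'a \<Rightarrow> 'a \<Rightarrow> 'a \<Rightarrow> 'a set" where
  "circumgyrocircle s A1 A2 A3 Ctr =
     {X \<in> gyroplane s A1 A2 A3. gdist s Ctr X = gdist s Ctr A1}"

definition gyroline :: "real \<Rightarrow> 'a::euclidean_space \<Rightarrow> 'a \<Rightarrow> 'a set" where
  "gyroline s P Q = {P + u *\<^sub>R (Q - P) | u. True} \<inter> gball s"

definition gbary :: "real \<Rightarrow> 'a::euclidean_space \<Rightarrow> 'a \<Rightarrow> 'a \<Rightarrow> real \<Rightarrow> real \<Rightarrow> real \<Rightarrow> 'a" where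
  "gbary s A1 A2 A3 m1 m2 m3 =
     (1 / (m1 * egamma s A1 + m2 * egamma s A2 + m3 * egamma s A3)) *\<^sub>R
     ((m1 * egamma s A1) *\<^sub>R A1 + (m2 * egamma s A2) *\<^sub>R A2 + (m3 * egamma s A3) *\<^sub>R A3)"

definition gbary_den :: "real \<Rightarrow> 'a::euclidean_space \<Rightarrow> 'a \<Rightarrow> 'a \<Rightarrow> real \<Rightarrow> real \<Rightarrow> real \<Rightarrow> real" where
  "gbary_den s A1 A2 A3 m1 m2 m3 = m1 * egamma s A1 + m2 * egamma s A2 + m3 * egamma s A3"

text \<open>For infinite t the homogeneous
  coordinates are taken as the leading coefficients (m' divided by t^2,
  the E_i divided by t), i.e. the limit of the projective point.\<close>

fun mp1 :: "real \<Rightarrow> real \<Rightarrow> real \<Rightarrow> ereal \<Rightarrow> real" where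
  "mp1 g12 g13 g23 (ereal t) = - (g23 - 1) * t"
| "mp1 g12 g13 g23 PInfty = 0"
| "mp1 g12 g13 g23 MInfty = 0"

fun mp2 :: "real \<Rightarrow> real \<Rightarrow> real \<Rightarrow> ereal \<Rightarrow> real" where
  "mp2 g12 g13 g23 (ereal t) = (g12 - 1) * t\<^sup>2 + (g13 - 1) * t"
| "mp2 g12 g13 g23 PInfty = g12 - 1"
| "mp2 g12 g13 g23 MInfty = g12 - 1"

fun mp3 :: "real \<Rightarrow> real \<Rightarrow> real \<Rightarrow> ereal \<Rightarrow> real" where
  "mp3 g12 g13 g23 (ereal t) = (g12 - 1) * t + (g13 - 1)"
| "mp3 g12 g13 g23 PInfty = 0"
| "mp3 g12 g13 g23 MInfty = 0"

fun E0 :: "real \<Rightarrow> real \<Rightarrow> real \<Rightarrow> real \<Rightarrow> real \<Rightarrow> real \<Rightarrow> ereal \<Rightarrow> real" where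
  "E0 g12 g13 g23 m1 m2 m3 (ereal t) = m2 - m3 * t"
| "E0 g12 g13 g23 m1 m2 m3 PInfty = - m3"
| "E0 g12 g13 g23 m1 m2 m3 MInfty = - m3"

fun E1 :: "real \<Rightarrow> real \<Rightarrow> real \<Rightarrow> real \<Rightarrow> real \<Rightarrow> real \<Rightarrow> ereal \<Rightarrow> real" where
  "E1 g12 g13 g23 m1 m2 m3 (ereal t) =
     m1 * (g13 - 1) + m2 * (g23 - 1) + m1 * (g12 - 1) * t"
| "E1 g12 g13 g23 m1 m2 m3 PInfty = m1 * (g12 - 1)"
| "E1 g12 g13 g23 m1 m2 m3 MInfty = m1 * (g12 - 1)"

fun E2 :: "real \<Rightarrow> real \<Rightarrow> real \<Rightarrow> real \<Rightarrow> real \<Rightarrow> real \<Rightarrow> ereal \<Rightarrow> real" where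
  "E2 g12 g13 g23 m1 m2 m3 (ereal t) =
     m1 * (g13 - 1) + m1 * (g12 - 1) * t + m3 * (g23 - 1) * t"
| "E2 g12 g13 g23 m1 m2 m3 PInfty = m1 * (g12 - 1) + m3 * (g23 - 1)"
| "E2 g12 g13 g23 m1 m2 m3 MInfty = m1 * (g12 - 1) + m3 * (g23 - 1)"

end

theory Submission
  imports Defs
begin

text \<open>In gyrobarycentric coordinates the circumgyrocircle is the conic
  \<open>Q(m) = (\<gamma>\<^sub>1\<^sub>2 - 1) m\<^sub>1 m\<^sub>2 + (\<gamma>\<^sub>1\<^sub>3 - 1) m\<^sub>1 m\<^sub>3 + (\<gamma>\<^sub>2\<^sub>3 - 1) m\<^sub>2 m\<^sub>3 = 0\<close>:
  the gyrodistance of \<open>X\<close> from the circumcentre \<open>C\<close> is governed by \<open>\<gamma>\<^sub>X (1 - C\<cdot>X/s\<^sup>2)\<close>, and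
  \<open>1 - C\<cdot>X/s\<^sup>2\<close> is a fixed multiple of \<open>(m\<^sub>1 + m\<^sub>2 + m\<^sub>3)/d\<close>, while
  \<open>1/\<gamma>\<^sub>X\<^sup>2 = 1 - \<parallel>X\<parallel>\<^sup>2/s\<^sup>2 = ((m\<^sub>1 + m\<^sub>2 + m\<^sub>3)\<^sup>2 + 2Q(m))/d\<^sup>2\<close>, where \<open>d\<close> is the
  denominator of \<open>X\<close>.
  A gyroline is a Euclidean line, so the points of the gyroline through the points with
  coordinates \<open>m\<close> and \<open>n\<close> have coordinates \<open>\<alpha>m + \<beta>n\<close>. If \<open>Q(n) = 0\<close>, then
  \<open>Q(\<alpha>m + \<beta>n) = \<alpha>(\<alpha>Q(m) + \<beta>B(m,n))\<close> with \<open>B\<close> the polarisation of \<open>Q\<close>, so the second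
  intersection has coordinates \<open>B(m,n) m - Q(m) n\<close>. For the parametrisation \<open>n = m'(t)\<close> of the
  circumgyrocircle these are exactly \<open>(E\<^sub>1E\<^sub>2, E\<^sub>0E\<^sub>1(\<gamma>\<^sub>1\<^sub>3 - 1), -E\<^sub>0E\<^sub>2(\<gamma>\<^sub>1\<^sub>2 - 1))\<close>.\<close>

section \<open>Einstein addition\<close>

lemma norm_sq_div_less_1:
  assumes "s > 0" "norm v < s"
  shows "(norm v)\<^sup>2 / s\<^sup>2 < 1"
proof -
  have "(norm v)\<^sup>2 < s\<^sup>2" using assms by (simp add: power_strict_mono)
  then show ?thesis using assms(1) by simp
qed

lemma egamma_pos:
  assumes "s > 0" "norm v < s"
  shows "egamma s v > 0"
  using norm_sq_div_less_1[OF assms] unfolding egamma_def by simp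

lemma egamma_sq:
  assumes "s > 0" "norm v < s"
  shows "(egamma s v)\<^sup>2 * (1 - (norm v)\<^sup>2 / s\<^sup>2) = 1"
proof -
  have "(norm v)\<^sup>2 < s\<^sup>2" using assms by (simp add: power_strict_mono)
  then show ?thesis using assms unfolding egamma_def by (simp add: power_divide)
qed

lemma egamma_eq_iff_norm_eq:
  assumes "s > 0" "norm u < s" "norm v < s"
  shows "egamma s u = egamma s v \<longleftrightarrow> norm u = norm v"
proof
  assume "egamma s u = egamma s v"
  then have "(egamma s u)\<^sup>2 * (1 - (norm u)\<^sup>2 / s\<^sup>2) = (egamma s u)\<^sup>2 * (1 - (norm v)\<^sup>2 / s\<^sup>2)"
    using egamma_sq[OF assms(1,2)] egamma_sq[OF assms(1,3)] by simp
  then have "(norm u)\<^sup>2 / s\<^sup>2 = (norm v)\<^sup>2 / s\<^sup>2"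
    using egamma_pos[OF assms(1,2)] by simp
  then show "norm u = norm v"
    using assms(1) by (simp add: power2_eq_iff_nonneg)
qed (simp add: egamma_def)

lemma egamma_eq_1_iff:
  assumes "s > 0" "norm v < s"
  shows "egamma s v = 1 \<longleftrightarrow> v = 0"
  using egamma_eq_iff_norm_eq[OF assms, of 0] assms by (simp add: egamma_def)

lemma egamma_uminus [simp]: "egamma s (- v) = egamma s v"
  unfolding egamma_def by simp

lemma one_plus_inner_div_pos:
  assumes "s > 0" "norm u < s" "norm v < s"
  shows "1 + (u \<bullet> v) / s\<^sup>2 > 0"
proof -
  have "\<bar>u \<bullet> v\<bar> \<le> norm u * norm v" by (rule Cauchy_Schwarz_ineq2)
  also have "\<dots> < s * s" using assms by (meson mult_strict_mono' norm_ge_zero)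
  finally show ?thesis using assms(1) by (auto simp: field_simps abs_less_iff power2_eq_square)
qed

definition eadd_coeff :: "real \<Rightarrow> 'a::euclidean_space \<Rightarrow> real" where
  "eadd_coeff s u = (1 / s\<^sup>2) * (egamma s u / (1 + egamma s u))"

lemma eadd_coeff_uminus [simp]: "eadd_coeff s (- v) = eadd_coeff s v"
  unfolding eadd_coeff_def by simp

lemma eadd_eq:
  "eadd s u v = (1 / (1 + (u \<bullet> v) / s\<^sup>2)) *\<^sub>R
     ((1 + eadd_coeff s u * (u \<bullet> v)) *\<^sub>R u + (1 / egamma s u) *\<^sub>R v)"
  unfolding eadd_def eadd_coeff_def by (simp add: algebra_simps)

lemma eadd_coeff_norm:
  assumes "s > 0" "norm u < s"
  shows "eadd_coeff s u * (norm u)\<^sup>2 = 1 - 1 / egamma s u"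
proof -
  define g h where "g = egamma s u" and "h = 1 + g"
  have "g > 0" using egamma_pos[OF assms] g_def by simp
  have "(norm u)\<^sup>2 = s\<^sup>2 * (g\<^sup>2 - 1) / g\<^sup>2"
    using egamma_sq[OF assms] assms(1) \<open>g > 0\<close> unfolding g_def[symmetric] by (simp add: field_simps)
  moreover have "h > 0" "h + g\<^sup>2 = 1 + g * h"
    using \<open>g > 0\<close> unfolding h_def by (auto simp: algebra_simps power2_eq_square)
  ultimately show ?thesis
    using assms(1) \<open>g > 0\<close> unfolding eadd_coeff_def g_def[symmetric] h_def[symmetric]
    by (simp add: field_simps power2_eq_square) algebra
qed

lemma eadd_coeff_one_plus_inv_egamma:
  assumes "s > 0" "norm u < s"
  shows "eadd_coeff s u * (1 + 1 / egamma s u) = 1 / s\<^sup>2"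
proof -
  have g: "egamma s u > 0" using egamma_pos[OF assms] .
  then have "1 + 1 / egamma s u = (1 + egamma s u) / egamma s u" by (simp add: field_simps)
  then show ?thesis using g unfolding eadd_coeff_def by simp
qed

lemma one_minus_norm_eadd:
  assumes "s > 0" "norm u < s" "norm v < s"
  shows "1 - (norm (eadd s u v))\<^sup>2 / s\<^sup>2
    = (1 - (norm u)\<^sup>2 / s\<^sup>2) * (1 - (norm v)\<^sup>2 / s\<^sup>2) / (1 + (u \<bullet> v) / s\<^sup>2)\<^sup>2"
proof -
  define a k p x y where "a = 1 / egamma s u" and "k = eadd_coeff s u" and "p = u \<bullet> v"
    and "x = (norm u)\<^sup>2" and "y = (norm v)\<^sup>2"
  have s2: "s\<^sup>2 > 0" using assms(1) by simp
  have ph: "1 + p / s\<^sup>2 > 0" using one_plus_inner_div_pos[OF assms] p_def by simp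
  have kx: "k * x + a = 1" using eadd_coeff_norm[OF assms(1,2)] k_def x_def a_def by simp
  have ka: "k * (1 + a) = 1 / s\<^sup>2"
    using eadd_coeff_one_plus_inv_egamma[OF assms(1,2)] k_def a_def by simp
  have "k * x + 2 * a = 1 + a" using kx by simp
  then have kk: "k * (k * x + 2 * a) = 1 / s\<^sup>2" using ka by (simp only:)
  have xa: "1 - x / s\<^sup>2 = a\<^sup>2"
    using egamma_sq[OF assms(1,2)] egamma_pos[OF assms(1,2)] unfolding x_def a_def
    by (simp add: field_simps power2_eq_square)
  have "(norm ((1 + k * p) *\<^sub>R u + a *\<^sub>R v))\<^sup>2 = (1 + k * p)\<^sup>2 * x + 2 * (1 + k * p) * a * p + a\<^sup>2 * y"
    unfolding x_def y_def p_def power2_norm_eq_inner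
    by (simp add: inner_add_left inner_add_right inner_commute algebra_simps power2_eq_square)
  also have "\<dots> = x + 2 * p * (k * x + a) + p\<^sup>2 * (k * (k * x + 2 * a)) + a\<^sup>2 * y"
    by (simp add: algebra_simps power2_eq_square)
  also have "\<dots> = x + 2 * p + p\<^sup>2 / s\<^sup>2 + a\<^sup>2 * y"
    unfolding kx kk by simp
  finally have "(norm (eadd s u v))\<^sup>2 = (x + 2 * p + p\<^sup>2 / s\<^sup>2 + a\<^sup>2 * y) / (1 + p / s\<^sup>2)\<^sup>2"
    unfolding eadd_eq k_def[symmetric] a_def[symmetric] p_def[symmetric] by (simp add: power_divide)
  moreover have "s\<^sup>2 * (1 + p / s\<^sup>2)\<^sup>2 - (x + 2 * p + p\<^sup>2 / s\<^sup>2 + a\<^sup>2 * y) = s\<^sup>2 * a\<^sup>2 * (1 - y / s\<^sup>2)"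
  proof -
    have x: "x = s\<^sup>2 * (1 - a\<^sup>2)" using xa s2 by (simp add: field_simps)
    show ?thesis using assms(1) unfolding x by (simp add: field_simps power2_eq_square)
  qed
  ultimately show ?thesis
    unfolding x_def[symmetric] y_def[symmetric] p_def[symmetric] xa
    using s2 ph by (simp add: field_simps)
qed

lemma eadd_in_ball:
  assumes "s > 0" "norm u < s" "norm v < s"
  shows "norm (eadd s u v) < s"
proof -
  have "1 - (norm (eadd s u v))\<^sup>2 / s\<^sup>2 > 0"
    unfolding one_minus_norm_eadd[OF assms]
    using norm_sq_div_less_1[OF assms(1,2)] norm_sq_div_less_1[OF assms(1,3)]
      one_plus_inner_div_pos[OF assms] by simp
  then have "(norm (eadd s u v))\<^sup>2 < s\<^sup>2" using assms(1) by (simp add: field_simps)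
  then show ?thesis using assms(1) by (simp add: power2_less_imp_less)
qed

lemma gyrominus_in_ball:
  assumes "s > 0" "norm A < s" "norm B < s"
  shows "norm (eadd s (- A) B) < s"
  using eadd_in_ball[of s "- A" B] assms by simp

lemma egamma_eadd:
  assumes "s > 0" "norm u < s" "norm v < s"
  shows "egamma s (eadd s u v) = egamma s u * egamma s v * (1 + (u \<bullet> v) / s\<^sup>2)"
proof -
  have "0 < 1 - (norm u)\<^sup>2 / s\<^sup>2" "0 < 1 - (norm v)\<^sup>2 / s\<^sup>2" "0 < 1 + (u \<bullet> v) / s\<^sup>2"
    using norm_sq_div_less_1[OF assms(1,2)] norm_sq_div_less_1[OF assms(1,3)]
      one_plus_inner_div_pos[OF assms] by simp_all
  then show ?thesis
    unfolding egamma_def one_minus_norm_eadd[OF assms]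
    by (simp add: real_sqrt_mult real_sqrt_divide)
qed

lemma egamma_gyrominus:
  assumes "s > 0" "norm A < s" "norm B < s"
  shows "egamma s (eadd s (- A) B) = egamma s A * egamma s B * (1 - (A \<bullet> B) / s\<^sup>2)"
  using egamma_eadd[of s "- A" B] assms by simp

lemma eadd_zero_right [simp]: "eadd s u 0 = u"
  unfolding eadd_def by simp

lemma eadd_left_cancel:
  assumes "s > 0" "norm A < s" "norm X < s"
  shows "eadd s A (eadd s (- A) X) = X"
proof -
  define a k q x ps where "a = 1 / egamma s A" and "k = eadd_coeff s A" and "q = A \<bullet> X"
    and "x = (norm A)\<^sup>2" and "ps = 1 - q / s\<^sup>2"
  define w where "w = eadd s (- A) X"
  have a: "a > 0" using egamma_pos[OF assms(1,2)] a_def by simp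
  have ps: "ps > 0" using one_plus_inner_div_pos[of s "- A" X] assms ps_def q_def by simp
  have kx: "k * x + a = 1" using eadd_coeff_norm[OF assms(1,2)] k_def x_def a_def by simp
  have ka: "k * (1 + a) = 1 / s\<^sup>2"
    using eadd_coeff_one_plus_inv_egamma[OF assms(1,2)] k_def a_def by simp
  have xa: "1 - x / s\<^sup>2 = a\<^sup>2"
    using egamma_sq[OF assms(1,2)] egamma_pos[OF assms(1,2)] unfolding x_def a_def
    by (simp add: field_simps power2_eq_square)
  define c where "c = (1 - k * q) / ps"
  have w: "w = (- c) *\<^sub>R A + (a / ps) *\<^sub>R X"
    unfolding w_def eadd_eq a_def k_def q_def ps_def c_def by (simp add: algebra_simps divide_inverse)
  have "A \<bullet> w = (q * (k * x + a) - x) / ps"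
    unfolding w x_def q_def c_def power2_norm_eq_inner
    using ps by (simp add: inner_add_right inner_diff_right field_simps)
  then have Aw: "A \<bullet> w = (q - x) / ps" unfolding kx by simp
  have "1 + (A \<bullet> w) / s\<^sup>2 = (1 - x / s\<^sup>2) / ps"
  proof -
    have "ps * s\<^sup>2 + q = s\<^sup>2" unfolding ps_def using assms(1) by (simp add: field_simps)
    then show ?thesis unfolding Aw using assms(1) ps by (simp add: field_simps)
  qed
  then have ph: "1 + (A \<bullet> w) / s\<^sup>2 = a\<^sup>2 / ps" unfolding xa .
  have "1 + k * (A \<bullet> w) - a * c = (ps + q * (k * (1 + a)) - (k * x + a)) / ps"
    unfolding Aw c_def using ps by (simp add: field_simps)
  also have "\<dots> = 0" unfolding ka kx ps_def by simp
  finally have coeff_A: "1 + k * (A \<bullet> w) - a * c = 0" .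
  have "eadd s A w = (ps / a\<^sup>2) *\<^sub>R ((1 + k * (A \<bullet> w)) *\<^sub>R A + a *\<^sub>R w)"
    unfolding eadd_eq[of s A w] ph a_def k_def by simp
  also have "\<dots> = (ps / a\<^sup>2) *\<^sub>R ((1 + k * (A \<bullet> w) - a * c) *\<^sub>R A + (a * a / ps) *\<^sub>R X)"
    unfolding w by (simp add: algebra_simps)
  also have "\<dots> = X"
    unfolding coeff_A using a ps by (simp add: power2_eq_square)
  finally show ?thesis unfolding w_def .
qed

section \<open>Gyrobarycentric coordinates\<close>

definition gbary_num :: "real \<Rightarrow> 'a \<Rightarrow> 'a \<Rightarrow> 'a \<Rightarrow> real \<Rightarrow> real \<Rightarrow> real \<Rightarrow> 'a::euclidean_space" where
  "gbary_num s A1 A2 A3 m1 m2 m3 =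
     (m1 * egamma s A1) *\<^sub>R A1 + (m2 * egamma s A2) *\<^sub>R A2 + (m3 * egamma s A3) *\<^sub>R A3"

lemma gbary_eq_num:
  "gbary s A1 A2 A3 m1 m2 m3 = (1 / gbary_den s A1 A2 A3 m1 m2 m3) *\<^sub>R gbary_num s A1 A2 A3 m1 m2 m3"
  unfolding gbary_def gbary_den_def gbary_num_def by simp

lemma gbary_num_eq_den_scaleR:
  "gbary_den s A1 A2 A3 m1 m2 m3 \<noteq> 0 \<Longrightarrow>
   gbary_num s A1 A2 A3 m1 m2 m3 = gbary_den s A1 A2 A3 m1 m2 m3 *\<^sub>R gbary s A1 A2 A3 m1 m2 m3"
  unfolding gbary_eq_num by simp

lemma gbary_num_lincomb:
  "gbary_num s A1 A2 A3 (x * m1 + y * n1) (x * m2 + y * n2) (x * m3 + y * n3)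
   = x *\<^sub>R gbary_num s A1 A2 A3 m1 m2 m3 + y *\<^sub>R gbary_num s A1 A2 A3 n1 n2 n3"
  unfolding gbary_num_def by (simp add: algebra_simps)

lemma gbary_den_lincomb:
  "gbary_den s A1 A2 A3 (x * m1 + y * n1) (x * m2 + y * n2) (x * m3 + y * n3)
   = x * gbary_den s A1 A2 A3 m1 m2 m3 + y * gbary_den s A1 A2 A3 n1 n2 n3"
  unfolding gbary_den_def by (simp add: algebra_simps)

lemma gbary_scale:
  assumes "l \<noteq> 0"
  shows "gbary s A1 A2 A3 (l * m1) (l * m2) (l * m3) = gbary s A1 A2 A3 m1 m2 m3"
proof -
  have "gbary_num s A1 A2 A3 (l * m1) (l * m2) (l * m3) = l *\<^sub>R gbary_num s A1 A2 A3 m1 m2 m3"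
    "gbary_den s A1 A2 A3 (l * m1) (l * m2) (l * m3) = l * gbary_den s A1 A2 A3 m1 m2 m3"
    unfolding gbary_num_def gbary_den_def by (simp_all add: algebra_simps)
  then show ?thesis using \<open>l \<noteq> 0\<close> unfolding gbary_eq_num by simp
qed

lemma scaled_gyrominus_eq:
  assumes "s > 0" "norm A < s" "norm v < s"
  shows "(1 - (A \<bullet> v) / s\<^sup>2) *\<^sub>R eadd s (- A) v
    = (eadd_coeff s A * (A \<bullet> v) - 1) *\<^sub>R A + (1 / egamma s A) *\<^sub>R v"
proof -
  define c where "c = 1 - (A \<bullet> v) / s\<^sup>2"
  have "c \<noteq> 0" using one_plus_inner_div_pos[of s "- A" v] assms c_def by simp
  moreover have "eadd s (- A) v = (1 / c) *\<^sub>R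
      ((eadd_coeff s A * (A \<bullet> v) - 1) *\<^sub>R A + (1 / egamma s A) *\<^sub>R v)"
    unfolding eadd_eq[of s "- A"] c_def by (simp add: algebra_simps)
  ultimately show ?thesis unfolding c_def[symmetric] by simp
qed

lemma gbary_in_gyroplane:
  assumes "s > 0" "norm A1 < s" "norm A2 < s" "norm A3 < s"
    and "gbary_den s A1 A2 A3 m1 m2 m3 \<noteq> 0" and "norm (gbary s A1 A2 A3 m1 m2 m3) < s"
  shows "gbary s A1 A2 A3 m1 m2 m3 \<in> gyroplane s A1 A2 A3"
proof -
  define X where "X = gbary s A1 A2 A3 m1 m2 m3"
  define w1 w2 w3 where "w1 = m1 * egamma s A1 / gbary_den s A1 A2 A3 m1 m2 m3"
    and "w2 = m2 * egamma s A2 / gbary_den s A1 A2 A3 m1 m2 m3"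
    and "w3 = m3 * egamma s A3 / gbary_den s A1 A2 A3 m1 m2 m3"
  have X: "X = w1 *\<^sub>R A1 + w2 *\<^sub>R A2 + w3 *\<^sub>R A3"
    unfolding X_def gbary_def w1_def w2_def w3_def gbary_den_def by (simp add: scaleR_add_right)
  have w: "w1 + w2 + w3 = 1"
    using assms(5) unfolding w1_def w2_def w3_def gbary_den_def by (simp add: add_divide_distrib[symmetric])
  \<comment> \<open>\<open>T\<close> is affine, vanishes at \<open>A1\<close> and is a nonzero multiple of \<open>\<ominus>A1 \<oplus> v\<close> elsewhere\<close>
  define T where "T v = (eadd_coeff s A1 * (A1 \<bullet> v) - 1) *\<^sub>R A1 + (1 / egamma s A1) *\<^sub>R v" for v
  have T_A1: "T A1 = 0"
    using eadd_coeff_norm[OF assms(1,2)]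
    unfolding T_def power2_norm_eq_inner by (simp add: scaleR_left_distrib[symmetric])
  have "T X = w1 *\<^sub>R T A1 + w2 *\<^sub>R T A2 + w3 *\<^sub>R T A3"
  proof -
    have "w1 *\<^sub>R A1 + (w2 *\<^sub>R A1 + w3 *\<^sub>R A1) = A1"
      using w by (metis scaleR_add_left scaleR_one add.assoc)
    then show ?thesis
      unfolding T_def X by (simp add: inner_add_right algebra_simps)
  qed
  also have "\<dots> \<in> span {eadd s (- A1) A2, eadd s (- A1) A3}"
  proof -
    have "T A2 = (1 - (A1 \<bullet> A2) / s\<^sup>2) *\<^sub>R eadd s (- A1) A2"
      "T A3 = (1 - (A1 \<bullet> A3) / s\<^sup>2) *\<^sub>R eadd s (- A1) A3"
      unfolding T_def scaled_gyrominus_eq[OF assms(1,2,3)] scaled_gyrominus_eq[OF assms(1,2,4)] by simp_all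
    then show ?thesis unfolding T_A1 by (simp add: span_add span_mul span_base)
  qed
  finally have span: "(1 - (A1 \<bullet> X) / s\<^sup>2) *\<^sub>R eadd s (- A1) X \<in> span {eadd s (- A1) A2, eadd s (- A1) A3}"
    unfolding T_def scaled_gyrominus_eq[OF assms(1,2) assms(6)[folded X_def]] .
  obtain c where c: "1 - (A1 \<bullet> X) / s\<^sup>2 = c" and "c > 0"
    using one_plus_inner_div_pos[of s "- A1" X] assms(1,2,6) X_def by simp
  have "(1 / c) *\<^sub>R (c *\<^sub>R eadd s (- A1) X) \<in> span {eadd s (- A1) A2, eadd s (- A1) A3}"
    using span unfolding c by (rule span_mul)
  then have "eadd s (- A1) X \<in> span {eadd s (- A1) A2, eadd s (- A1) A3}"
    using \<open>c > 0\<close> by simp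
  moreover have "X = eadd s A1 (eadd s (- A1) X)"
    using eadd_left_cancel[OF assms(1,2)] assms(6) X_def by simp
  ultimately show ?thesis
    using assms(6) unfolding X_def[symmetric] gyroplane_def gball_def by blast
qed

section \<open>The quadratic form of a gyrotriangle\<close>

definition circ_quad :: "real \<Rightarrow> real \<Rightarrow> real \<Rightarrow> real \<Rightarrow> real \<Rightarrow> real \<Rightarrow> real" where
  "circ_quad g12 g13 g23 m1 m2 m3 = (g12 - 1) * m1 * m2 + (g13 - 1) * m1 * m3 + (g23 - 1) * m2 * m3"

definition circ_polar ::
    "real \<Rightarrow> real \<Rightarrow> real \<Rightarrow> real \<Rightarrow> real \<Rightarrow> real \<Rightarrow> real \<Rightarrow> real \<Rightarrow> real \<Rightarrow> real" where
  "circ_polar g12 g13 g23 m1 m2 m3 n1 n2 n3 =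
     (g12 - 1) * (m1 * n2 + m2 * n1) + (g13 - 1) * (m1 * n3 + m3 * n1) + (g23 - 1) * (m2 * n3 + m3 * n2)"

lemma circ_quad_lincomb:
  "circ_quad g12 g13 g23 (x * m1 + y * n1) (x * m2 + y * n2) (x * m3 + y * n3)
   = x\<^sup>2 * circ_quad g12 g13 g23 m1 m2 m3 + x * y * circ_polar g12 g13 g23 m1 m2 m3 n1 n2 n3
     + y\<^sup>2 * circ_quad g12 g13 g23 n1 n2 n3"
  unfolding circ_quad_def circ_polar_def power2_eq_square by (simp add: algebra_simps)

lemma gbary_den_sq_minus_norm_num:
  assumes "s > 0" "norm A1 < s" "norm A2 < s" "norm A3 < s"
  shows "(gbary_den s A1 A2 A3 m1 m2 m3)\<^sup>2 - (norm (gbary_num s A1 A2 A3 m1 m2 m3))\<^sup>2 / s\<^sup>2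
    = (m1 + m2 + m3)\<^sup>2 + 2 * circ_quad (egamma s (eadd s (- A1) A2)) (egamma s (eadd s (- A1) A3))
        (egamma s (eadd s (- A2) A3)) m1 m2 m3"
proof -
  define g1 g2 g3 where "g1 = egamma s A1" and "g2 = egamma s A2" and "g3 = egamma s A3"
  have e1: "g1\<^sup>2 * ((norm A1)\<^sup>2 / s\<^sup>2) = g1\<^sup>2 - 1"
    using egamma_sq[OF assms(1,2)] unfolding g1_def by (simp add: algebra_simps)
  have e2: "g2\<^sup>2 * ((norm A2)\<^sup>2 / s\<^sup>2) = g2\<^sup>2 - 1"
    using egamma_sq[OF assms(1,3)] unfolding g2_def by (simp add: algebra_simps)
  have e3: "g3\<^sup>2 * ((norm A3)\<^sup>2 / s\<^sup>2) = g3\<^sup>2 - 1"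
    using egamma_sq[OF assms(1,4)] unfolding g3_def by (simp add: algebra_simps)
  have p12: "g1 * g2 * ((A1 \<bullet> A2) / s\<^sup>2) = g1 * g2 - egamma s (eadd s (- A1) A2)"
    using egamma_gyrominus[OF assms(1,2,3)] unfolding g1_def g2_def by (simp add: algebra_simps)
  have p13: "g1 * g3 * ((A1 \<bullet> A3) / s\<^sup>2) = g1 * g3 - egamma s (eadd s (- A1) A3)"
    using egamma_gyrominus[OF assms(1,2,4)] unfolding g1_def g3_def by (simp add: algebra_simps)
  have p23: "g2 * g3 * ((A2 \<bullet> A3) / s\<^sup>2) = g2 * g3 - egamma s (eadd s (- A2) A3)"
    using egamma_gyrominus[OF assms(1,3,4)] unfolding g2_def g3_def by (simp add: algebra_simps)
  have "(norm (gbary_num s A1 A2 A3 m1 m2 m3))\<^sup>2 / s\<^sup>2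
    = m1\<^sup>2 * (g1\<^sup>2 * ((norm A1)\<^sup>2 / s\<^sup>2)) + m2\<^sup>2 * (g2\<^sup>2 * ((norm A2)\<^sup>2 / s\<^sup>2))
      + m3\<^sup>2 * (g3\<^sup>2 * ((norm A3)\<^sup>2 / s\<^sup>2)) + 2 * m1 * m2 * (g1 * g2 * ((A1 \<bullet> A2) / s\<^sup>2))
      + 2 * m1 * m3 * (g1 * g3 * ((A1 \<bullet> A3) / s\<^sup>2)) + 2 * m2 * m3 * (g2 * g3 * ((A2 \<bullet> A3) / s\<^sup>2))"
    unfolding gbary_num_def g1_def g2_def g3_def power2_norm_eq_inner
    by (simp add: inner_add_left inner_add_right inner_commute algebra_simps power2_eq_square
        add_divide_distrib)
  then show ?thesis
    unfolding e1 e2 e3 p12 p13 p23 gbary_den_def circ_quad_def g1_def[symmetric] g2_def[symmetric]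
      g3_def[symmetric]
    by (simp add: algebra_simps power2_eq_square)
qed

lemma one_minus_norm_gbary:
  assumes "s > 0" "norm A1 < s" "norm A2 < s" "norm A3 < s"
    and "gbary_den s A1 A2 A3 m1 m2 m3 \<noteq> 0"
  shows "1 - (norm (gbary s A1 A2 A3 m1 m2 m3))\<^sup>2 / s\<^sup>2
    = ((m1 + m2 + m3) / gbary_den s A1 A2 A3 m1 m2 m3)\<^sup>2
      + 2 * circ_quad (egamma s (eadd s (- A1) A2)) (egamma s (eadd s (- A1) A3))
          (egamma s (eadd s (- A2) A3)) m1 m2 m3 / (gbary_den s A1 A2 A3 m1 m2 m3)\<^sup>2"
proof -
  have "1 - (norm (gbary s A1 A2 A3 m1 m2 m3))\<^sup>2 / s\<^sup>2
    = ((gbary_den s A1 A2 A3 m1 m2 m3)\<^sup>2 - (norm (gbary_num s A1 A2 A3 m1 m2 m3))\<^sup>2 / s\<^sup>2)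
      / (gbary_den s A1 A2 A3 m1 m2 m3)\<^sup>2"
    unfolding gbary_eq_num using assms(5) by (simp add: power_divide field_simps)
  then show ?thesis
    unfolding gbary_den_sq_minus_norm_num[OF assms(1-4)] by (simp add: power_divide flip: add_divide_distrib)
qed

lemma circ_quad_den_eq_0_imp_num_eq_0:
  assumes "s > 0" "norm A1 < s" "norm A2 < s" "norm A3 < s"
    and "circ_quad (egamma s (eadd s (- A1) A2)) (egamma s (eadd s (- A1) A3))
           (egamma s (eadd s (- A2) A3)) m1 m2 m3 = 0"
    and "gbary_den s A1 A2 A3 m1 m2 m3 = 0"
  shows "gbary_num s A1 A2 A3 m1 m2 m3 = 0"
proof -
  have "- (norm (gbary_num s A1 A2 A3 m1 m2 m3))\<^sup>2 / s\<^sup>2 = (m1 + m2 + m3)\<^sup>2"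
    using gbary_den_sq_minus_norm_num[OF assms(1-4), of m1 m2 m3] assms(5,6) by simp
  then have "(norm (gbary_num s A1 A2 A3 m1 m2 m3))\<^sup>2 / s\<^sup>2 \<le> 0"
    by (metis neg_0_le_iff_le zero_le_power2 minus_divide_left)
  then show ?thesis using assms(1) by (simp add: divide_le_0_iff)
qed

text \<open>The equations for infinite \<open>t\<close> are stated for the constructors \<open>PInfty\<close> and \<open>MInfty\<close>,
  which the simplifier rewrites to \<open>\<infinity>\<close> and \<open>-\<infinity>\<close> before they can fire.\<close>

lemmas coords_at_infinity [simp] =
  mp1.simps(2,3)[unfolded PInfty_eq_infinity MInfty_eq_minfinity]
  mp2.simps(2,3)[unfolded PInfty_eq_infinity MInfty_eq_minfinity]
  mp3.simps(2,3)[unfolded PInfty_eq_infinity MInfty_eq_minfinity]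
  E0.simps(2,3)[unfolded PInfty_eq_infinity MInfty_eq_minfinity]
  E1.simps(2,3)[unfolded PInfty_eq_infinity MInfty_eq_minfinity]
  E2.simps(2,3)[unfolded PInfty_eq_infinity MInfty_eq_minfinity]

lemma E_coords_eq_polar_combination:
  fixes g12 g13 g23 m1 m2 m3 :: real and t :: ereal
  defines "B \<equiv> circ_polar g12 g13 g23 m1 m2 m3 (mp1 g12 g13 g23 t) (mp2 g12 g13 g23 t) (mp3 g12 g13 g23 t)"
    and "q \<equiv> circ_quad g12 g13 g23 m1 m2 m3"
  shows "E1 g12 g13 g23 m1 m2 m3 t * E2 g12 g13 g23 m1 m2 m3 t = B * m1 - q * mp1 g12 g13 g23 t"
    and "E0 g12 g13 g23 m1 m2 m3 t * E1 g12 g13 g23 m1 m2 m3 t * (g13 - 1) = B * m2 - q * mp2 g12 g13 g23 t"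
    and "- E0 g12 g13 g23 m1 m2 m3 t * E2 g12 g13 g23 m1 m2 m3 t * (g12 - 1) = B * m3 - q * mp3 g12 g13 g23 t"
  unfolding B_def q_def circ_polar_def circ_quad_def
  by (atomize (full), cases t) (simp_all add: power2_eq_square algebra_simps)

lemma E1_minus_E2:
  "E1 g12 g13 g23 m1 m2 m3 t - E2 g12 g13 g23 m1 m2 m3 t = (g23 - 1) * E0 g12 g13 g23 m1 m2 m3 t"
  by (cases t) (simp_all add: algebra_simps)

lemma coords_proportional_if_E0_E1_eq_0:
  assumes "g12 \<noteq> 1" "g13 \<noteq> 1" "g23 \<noteq> 1"
    and "E0 g12 g13 g23 m1 m2 m3 t = 0" "E1 g12 g13 g23 m1 m2 m3 t = 0"
  shows "\<exists>l. m1 = l * mp1 g12 g13 g23 t \<and> m2 = l * mp2 g12 g13 g23 t \<and> m3 = l * mp3 g12 g13 g23 t"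
proof (cases t)
  case (real r)
  define K where "K = (g12 - 1) * r + (g13 - 1)"
  have m2: "m2 = m3 * r" and m1: "m1 * K = - m3 * r * (g23 - 1)"
    using assms(4,5) real unfolding K_def by (simp_all add: algebra_simps)
  have mp: "mp1 g12 g13 g23 t = - (g23 - 1) * r" "mp2 g12 g13 g23 t = r * K" "mp3 g12 g13 g23 t = K"
    using real unfolding K_def by (simp_all add: power2_eq_square algebra_simps)
  show ?thesis
  proof (cases "K = 0")
    case True
    then have "r \<noteq> 0" using assms(2) unfolding K_def by auto
    then have "m3 = 0" using m1 True assms(3) by simp
    then show ?thesis using True m2 mp \<open>r \<noteq> 0\<close> assms(3)
      by (intro exI[of _ "m1 / (- (g23 - 1) * r)"]) auto
  next
    case False
    then show ?thesis using m1 m2 unfolding mp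
      by (intro exI[of _ "m3 / K"]) (simp add: field_simps)
  qed
qed (use assms in \<open>auto intro: exI[of _ "m2 / (g12 - 1)"]\<close>)

lemma E_coords_not_all_zero:
  assumes "g12 \<noteq> 1" "g13 \<noteq> 1" "g23 \<noteq> 1"
    and "gbary_den s A1 A2 A3 m1 m2 m3 \<noteq> 0"
    and "gbary s A1 A2 A3 m1 m2 m3
      \<noteq> gbary s A1 A2 A3 (mp1 g12 g13 g23 t) (mp2 g12 g13 g23 t) (mp3 g12 g13 g23 t)"
  shows "\<not> (E1 g12 g13 g23 m1 m2 m3 t * E2 g12 g13 g23 m1 m2 m3 t = 0
    \<and> E0 g12 g13 g23 m1 m2 m3 t * E1 g12 g13 g23 m1 m2 m3 t * (g13 - 1) = 0
    \<and> - E0 g12 g13 g23 m1 m2 m3 t * E2 g12 g13 g23 m1 m2 m3 t * (g12 - 1) = 0)"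
proof
  assume zero: "E1 g12 g13 g23 m1 m2 m3 t * E2 g12 g13 g23 m1 m2 m3 t = 0
    \<and> E0 g12 g13 g23 m1 m2 m3 t * E1 g12 g13 g23 m1 m2 m3 t * (g13 - 1) = 0
    \<and> - E0 g12 g13 g23 m1 m2 m3 t * E2 g12 g13 g23 m1 m2 m3 t * (g12 - 1) = 0"
  have E0: "E0 g12 g13 g23 m1 m2 m3 t = 0"
  proof (rule ccontr)
    assume "E0 g12 g13 g23 m1 m2 m3 t \<noteq> 0"
    moreover from this have "E1 g12 g13 g23 m1 m2 m3 t = 0" "E2 g12 g13 g23 m1 m2 m3 t = 0"
      using zero assms(1,2) by simp_all
    ultimately show False using E1_minus_E2[of g12 g13 g23 m1 m2 m3 t] assms(3) by simp
  qed
  then have "E1 g12 g13 g23 m1 m2 m3 t = E2 g12 g13 g23 m1 m2 m3 t"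
    using E1_minus_E2[of g12 g13 g23 m1 m2 m3 t] by simp
  then have "E1 g12 g13 g23 m1 m2 m3 t = 0" using zero by simp
  then obtain l where l: "m1 = l * mp1 g12 g13 g23 t" "m2 = l * mp2 g12 g13 g23 t" "m3 = l * mp3 g12 g13 g23 t"
    using coords_proportional_if_E0_E1_eq_0[OF assms(1-3) E0] by blast
  then have "l \<noteq> 0" using assms(4) by (auto simp: gbary_den_def)
  then show False using assms(5) unfolding l by (simp add: gbary_scale)
qed

section \<open>The circumgyrocircle as a conic\<close>

locale circumscribed_gyrotriangle =
  fixes s :: real and A1 A2 A3 Ctr :: "'a::euclidean_space"
  assumes s_pos: "s > 0"
    and tri: "gyrotriangle s A1 A2 A3"
    and circ: "circumcentre s A1 A2 A3 Ctr"
begin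

abbreviation "gamma12 \<equiv> egamma s (eadd s (- A1) A2)"
abbreviation "gamma13 \<equiv> egamma s (eadd s (- A1) A3)"
abbreviation "gamma23 \<equiv> egamma s (eadd s (- A2) A3)"

lemma vertices_in_ball: "norm A1 < s" "norm A2 < s" "norm A3 < s"
  using tri unfolding gyrotriangle_def gball_def by auto

lemma centre_in_ball: "norm Ctr < s"
  using circ unfolding circumcentre_def gyroplane_def gball_def by auto

lemma gamma12_ne_1: "gamma12 \<noteq> 1"
  and gamma13_ne_1: "gamma13 \<noteq> 1"
  and gamma23_ne_1: "gamma23 \<noteq> 1"
proof -
  have indep: "\<not> dependent {eadd s (- A1) A2, eadd s (- A1) A3}"
    and ne: "eadd s (- A1) A2 \<noteq> eadd s (- A1) A3"
    using tri unfolding gyrotriangle_def by auto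
  have "eadd s (- A1) A2 \<noteq> 0" "eadd s (- A1) A3 \<noteq> 0"
    using indep dependent_zero[of "{eadd s (- A1) A2, eadd s (- A1) A3}"] by auto
  moreover have "eadd s (- A2) A3 \<noteq> 0"
    using eadd_left_cancel[OF s_pos vertices_in_ball(2,3)] ne by (metis eadd_zero_right)
  ultimately show "gamma12 \<noteq> 1" "gamma13 \<noteq> 1" "gamma23 \<noteq> 1"
    using egamma_eq_1_iff[OF s_pos gyrominus_in_ball[OF s_pos]] vertices_in_ball by auto
qed

definition circ_weight :: real where
  "circ_weight = egamma s (eadd s (- Ctr) A1) / egamma s Ctr"

lemma circ_weight_pos: "circ_weight > 0"
  unfolding circ_weight_def
  using egamma_pos[OF s_pos gyrominus_in_ball[OF s_pos centre_in_ball vertices_in_ball(1)]]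
    egamma_pos[OF s_pos centre_in_ball] by simp

lemma gdist_centre_eq_iff:
  assumes "norm X < s"
  shows "gdist s Ctr X = gdist s Ctr A1 \<longleftrightarrow> egamma s X * (1 - (Ctr \<bullet> X) / s\<^sup>2) = circ_weight"
proof -
  have C: "norm (- Ctr) < s" "egamma s Ctr > 0" using centre_in_ball egamma_pos[OF s_pos] by simp_all
  have "gdist s Ctr X = gdist s Ctr A1 \<longleftrightarrow> egamma s (eadd s (- Ctr) X) = egamma s (eadd s (- Ctr) A1)"
    unfolding gdist_def
    using egamma_eq_iff_norm_eq[OF s_pos eadd_in_ball[OF s_pos C(1) assms] eadd_in_ball[OF s_pos C(1)]]
      vertices_in_ball by simp
  also have "\<dots> \<longleftrightarrow> egamma s Ctr * (egamma s X * (1 - (Ctr \<bullet> X) / s\<^sup>2)) = egamma s Ctr * circ_weight"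
    unfolding egamma_gyrominus[OF s_pos centre_in_ball assms] circ_weight_def using C(2)
    by (simp add: algebra_simps)
  finally show ?thesis using C(2) by simp
qed

lemma vertex_weight: "egamma s A1 * (1 - (Ctr \<bullet> A1) / s\<^sup>2) = circ_weight"
  "egamma s A2 * (1 - (Ctr \<bullet> A2) / s\<^sup>2) = circ_weight"
  "egamma s A3 * (1 - (Ctr \<bullet> A3) / s\<^sup>2) = circ_weight"
  using gdist_centre_eq_iff[OF vertices_in_ball(1)] gdist_centre_eq_iff[OF vertices_in_ball(2)]
    gdist_centre_eq_iff[OF vertices_in_ball(3)] circ
  unfolding circumcentre_def by simp_all

lemma one_minus_centre_inner_gbary:
  assumes "gbary_den s A1 A2 A3 m1 m2 m3 \<noteq> 0"
  shows "1 - (Ctr \<bullet> gbary s A1 A2 A3 m1 m2 m3) / s\<^sup>2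
    = circ_weight * ((m1 + m2 + m3) / gbary_den s A1 A2 A3 m1 m2 m3)"
proof -
  have "gbary_den s A1 A2 A3 m1 m2 m3 - (Ctr \<bullet> gbary_num s A1 A2 A3 m1 m2 m3) / s\<^sup>2
    = m1 * (egamma s A1 * (1 - (Ctr \<bullet> A1) / s\<^sup>2)) + m2 * (egamma s A2 * (1 - (Ctr \<bullet> A2) / s\<^sup>2))
      + m3 * (egamma s A3 * (1 - (Ctr \<bullet> A3) / s\<^sup>2))"
    unfolding gbary_den_def gbary_num_def
    by (simp add: inner_add_right algebra_simps add_divide_distrib diff_divide_distrib)
  also have "\<dots> = circ_weight * (m1 + m2 + m3)"
    unfolding vertex_weight by (simp add: algebra_simps)
  finally have "gbary_den s A1 A2 A3 m1 m2 m3 - (Ctr \<bullet> gbary_num s A1 A2 A3 m1 m2 m3) / s\<^sup>2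
    = circ_weight * (m1 + m2 + m3)" .
  moreover have "1 - (Ctr \<bullet> gbary s A1 A2 A3 m1 m2 m3) / s\<^sup>2
    = (gbary_den s A1 A2 A3 m1 m2 m3 - (Ctr \<bullet> gbary_num s A1 A2 A3 m1 m2 m3) / s\<^sup>2)
      / gbary_den s A1 A2 A3 m1 m2 m3"
    using assms s_pos unfolding gbary_eq_num by (simp add: field_simps)
  ultimately show ?thesis by simp
qed

lemma gbary_on_circumgyrocircle_iff:
  assumes den: "gbary_den s A1 A2 A3 m1 m2 m3 \<noteq> 0"
  shows "gbary s A1 A2 A3 m1 m2 m3 \<in> circumgyrocircle s A1 A2 A3 Ctr
    \<longleftrightarrow> circ_quad gamma12 gamma13 gamma23 m1 m2 m3 = 0"
proof -
  define X d q \<sigma> where "X = gbary s A1 A2 A3 m1 m2 m3" and "d = gbary_den s A1 A2 A3 m1 m2 m3"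
    and "q = circ_quad gamma12 gamma13 gamma23 m1 m2 m3" and "\<sigma> = (m1 + m2 + m3) / d"
  have d: "d \<noteq> 0" using den d_def by simp
  have norm_X: "1 - (norm X)\<^sup>2 / s\<^sup>2 = \<sigma>\<^sup>2 + 2 * q / d\<^sup>2"
    using one_minus_norm_gbary[OF s_pos vertices_in_ball den] X_def d_def q_def \<sigma>_def by simp
  have inner_X: "1 - (Ctr \<bullet> X) / s\<^sup>2 = circ_weight * \<sigma>"
    using one_minus_centre_inner_gbary[OF den] X_def d_def \<sigma>_def by simp
  show ?thesis
    unfolding X_def[symmetric] q_def[symmetric]
  proof
    assume "X \<in> circumgyrocircle s A1 A2 A3 Ctr"
    then have X: "norm X < s" "egamma s X * (1 - (Ctr \<bullet> X) / s\<^sup>2) = circ_weight"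
      using gdist_centre_eq_iff unfolding circumgyrocircle_def gyroplane_def gball_def by auto
    then have "circ_weight * (egamma s X * \<sigma>) = circ_weight * 1"
      unfolding inner_X by (simp add: algebra_simps)
    then have "(egamma s X)\<^sup>2 * \<sigma>\<^sup>2 = 1"
      using circ_weight_pos by (simp flip: power_mult_distrib)
    moreover have "(egamma s X)\<^sup>2 * (\<sigma>\<^sup>2 + 2 * q / d\<^sup>2) = 1"
      using egamma_sq[OF s_pos X(1)] unfolding norm_X .
    ultimately have "(egamma s X)\<^sup>2 * (2 * q / d\<^sup>2) = 0" by (simp add: algebra_simps)
    then show "q = 0" using egamma_pos[OF s_pos X(1)] d by simp
  next
    assume "q = 0"
    then have norm_X': "1 - (norm X)\<^sup>2 / s\<^sup>2 = \<sigma>\<^sup>2" using norm_X by simp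
    have "\<sigma> \<noteq> 0"
    proof
      assume "\<sigma> = 0"
      then have "norm X = s" "Ctr \<bullet> X = s\<^sup>2"
        using norm_X' inner_X s_pos by (simp_all add: power2_eq_iff_nonneg)
      moreover have "\<bar>Ctr \<bullet> X\<bar> < s * norm X"
        using Cauchy_Schwarz_ineq2[of Ctr X] centre_in_ball s_pos \<open>norm X = s\<close>
        by (auto intro: le_less_trans mult_strict_right_mono)
      ultimately show False by (simp add: power2_eq_square)
    qed
    then have "\<sigma>\<^sup>2 > 0" by simp
    then have "(norm X)\<^sup>2 / s\<^sup>2 < 1"
      using norm_X' by linarith
    then have "(norm X)\<^sup>2 < s\<^sup>2"
      using s_pos by (simp add: divide_less_eq)
    then have X: "norm X < s"
      using s_pos by (simp add: power2_less_imp_less)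
    have gX: "egamma s X = 1 / \<bar>\<sigma>\<bar>" unfolding egamma_def norm_X' by simp
    have "0 < egamma s (eadd s (- Ctr) X)"
      using egamma_pos[OF s_pos gyrominus_in_ball[OF s_pos centre_in_ball X]] .
    also have "egamma s (eadd s (- Ctr) X) = egamma s Ctr * circ_weight * (\<sigma> / \<bar>\<sigma>\<bar>)"
      unfolding egamma_gyrominus[OF s_pos centre_in_ball X] gX inner_X by simp
    finally have "\<sigma> > 0"
      using mult_pos_pos[OF egamma_pos[OF s_pos centre_in_ball] circ_weight_pos]
      by (simp add: zero_less_mult_iff zero_less_divide_iff)
    then have "gdist s Ctr X = gdist s Ctr A1"
      unfolding gdist_centre_eq_iff[OF X] inner_X gX by simp
    moreover have "X \<in> gyroplane s A1 A2 A3"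
      using gbary_in_gyroplane[OF s_pos vertices_in_ball den] X X_def by simp
    ultimately show "X \<in> circumgyrocircle s A1 A2 A3 Ctr"
      unfolding circumgyrocircle_def by simp
  qed
qed

lemma polar_point_on_circle_and_line:
  fixes m1 m2 m3 n1 n2 n3 :: real
  defines "B \<equiv> circ_polar gamma12 gamma13 gamma23 m1 m2 m3 n1 n2 n3"
    and "q \<equiv> circ_quad gamma12 gamma13 gamma23 m1 m2 m3"
  assumes dm: "gbary_den s A1 A2 A3 m1 m2 m3 \<noteq> 0" and dn: "gbary_den s A1 A2 A3 n1 n2 n3 \<noteq> 0"
    and qn: "circ_quad gamma12 gamma13 gamma23 n1 n2 n3 = 0"
    and ne: "gbary s A1 A2 A3 m1 m2 m3 \<noteq> gbary s A1 A2 A3 n1 n2 n3"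
    and r: "\<not> (B * m1 - q * n1 = 0 \<and> B * m2 - q * n2 = 0 \<and> B * m3 - q * n3 = 0)"
  shows "gbary s A1 A2 A3 (B * m1 - q * n1) (B * m2 - q * n2) (B * m3 - q * n3)
    \<in> circumgyrocircle s A1 A2 A3 Ctr \<inter> gyroline s (gbary s A1 A2 A3 m1 m2 m3) (gbary s A1 A2 A3 n1 n2 n3)"
proof -
  define P P' Dm Dn Dr where "P = gbary s A1 A2 A3 m1 m2 m3" and "P' = gbary s A1 A2 A3 n1 n2 n3"
    and "Dm = gbary_den s A1 A2 A3 m1 m2 m3" and "Dn = gbary_den s A1 A2 A3 n1 n2 n3"
    and "Dr = gbary_den s A1 A2 A3 (B * m1 - q * n1) (B * m2 - q * n2) (B * m3 - q * n3)"
  have lin: "B * x - q * y = B * x + (- q) * y" for x y by simp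
  have qr: "circ_quad gamma12 gamma13 gamma23 (B * m1 - q * n1) (B * m2 - q * n2) (B * m3 - q * n3) = 0"
    unfolding lin circ_quad_lincomb qn B_def[symmetric] q_def[symmetric] by (simp add: power2_eq_square)
  have Dr: "Dr = B * Dm - q * Dn"
    unfolding Dr_def Dm_def Dn_def lin gbary_den_lincomb by simp
  have Nr: "gbary_num s A1 A2 A3 (B * m1 - q * n1) (B * m2 - q * n2) (B * m3 - q * n3)
    = (B * Dm) *\<^sub>R P - (q * Dn) *\<^sub>R P'"
    unfolding lin gbary_num_lincomb gbary_num_eq_den_scaleR[OF dm] gbary_num_eq_den_scaleR[OF dn]
      P_def P'_def Dm_def Dn_def by simp
  have "Dr \<noteq> 0"
  proof
    assume "Dr = 0"
    then have "q * Dn = B * Dm" using Dr by simp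
    moreover have "(B * Dm) *\<^sub>R P - (q * Dn) *\<^sub>R P' = 0"
      using circ_quad_den_eq_0_imp_num_eq_0[OF s_pos vertices_in_ball qr] \<open>Dr = 0\<close> Dr_def Nr by simp
    ultimately have "(B * Dm) *\<^sub>R (P - P') = 0" by (simp add: scaleR_diff_right)
    then have "B = 0" using ne dm P_def P'_def Dm_def by simp
    then have "q = 0" using \<open>q * Dn = B * Dm\<close> dn Dn_def by simp
    then show False using r \<open>B = 0\<close> by simp
  qed
  have on_circle: "gbary s A1 A2 A3 (B * m1 - q * n1) (B * m2 - q * n2) (B * m3 - q * n3)
    \<in> circumgyrocircle s A1 A2 A3 Ctr"
    using gbary_on_circumgyrocircle_iff \<open>Dr \<noteq> 0\<close> qr Dr_def by simp
  then have "norm (gbary s A1 A2 A3 (B * m1 - q * n1) (B * m2 - q * n2) (B * m3 - q * n3)) < s"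
    unfolding circumgyrocircle_def gyroplane_def gball_def by simp
  moreover have "gbary s A1 A2 A3 (B * m1 - q * n1) (B * m2 - q * n2) (B * m3 - q * n3)
    = P + (- (q * Dn) / Dr) *\<^sub>R (P' - P)"
  proof -
    have "B * Dm = Dr + q * Dn" using Dr by simp
    then show ?thesis
      unfolding gbary_eq_num Nr Dr_def[symmetric] using \<open>Dr \<noteq> 0\<close>
      by (simp add: algebra_simps divide_simps)
  qed
  ultimately show ?thesis
    using on_circle unfolding gyroline_def gball_def P_def P'_def by blast
qed

lemma chord_point_eq_polar_point:
  fixes m1 m2 m3 n1 n2 n3 :: real
  defines "B \<equiv> circ_polar gamma12 gamma13 gamma23 m1 m2 m3 n1 n2 n3"
    and "q \<equiv> circ_quad gamma12 gamma13 gamma23 m1 m2 m3"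
  assumes dm: "gbary_den s A1 A2 A3 m1 m2 m3 \<noteq> 0" and dn: "gbary_den s A1 A2 A3 n1 n2 n3 \<noteq> 0"
    and qn: "circ_quad gamma12 gamma13 gamma23 n1 n2 n3 = 0"
    and r: "\<not> (B * m1 - q * n1 = 0 \<and> B * m2 - q * n2 = 0 \<and> B * m3 - q * n3 = 0)"
    and X: "X \<in> circumgyrocircle s A1 A2 A3 Ctr \<inter>
      gyroline s (gbary s A1 A2 A3 m1 m2 m3) (gbary s A1 A2 A3 n1 n2 n3)"
    and ne: "X \<noteq> gbary s A1 A2 A3 n1 n2 n3"
  shows "X = gbary s A1 A2 A3 (B * m1 - q * n1) (B * m2 - q * n2) (B * m3 - q * n3)"
proof -
  define P P' Dm Dn where "P = gbary s A1 A2 A3 m1 m2 m3" and "P' = gbary s A1 A2 A3 n1 n2 n3"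
    and "Dm = gbary_den s A1 A2 A3 m1 m2 m3" and "Dn = gbary_den s A1 A2 A3 n1 n2 n3"
  obtain u where u: "X = P + u *\<^sub>R (P' - P)"
    using X unfolding gyroline_def P_def P'_def by auto
  define \<alpha> \<beta> where "\<alpha> = (1 - u) / Dm" and "\<beta> = u / Dn"
  define k1 k2 k3 where "k1 = \<alpha> * m1 + \<beta> * n1" and "k2 = \<alpha> * m2 + \<beta> * n2"
    and "k3 = \<alpha> * m3 + \<beta> * n3"
  have Dk: "gbary_den s A1 A2 A3 k1 k2 k3 = 1"
    unfolding k1_def k2_def k3_def gbary_den_lincomb \<alpha>_def \<beta>_def Dm_def Dn_def using dm dn by simp
  have \<alpha>\<beta>: "\<alpha> * Dm = 1 - u" "\<beta> * Dn = u"
    using dm dn unfolding \<alpha>_def \<beta>_def Dm_def Dn_def by simp_all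
  have "gbary_num s A1 A2 A3 k1 k2 k3 = (\<alpha> * Dm) *\<^sub>R P + (\<beta> * Dn) *\<^sub>R P'"
    unfolding k1_def k2_def k3_def gbary_num_lincomb gbary_num_eq_den_scaleR[OF dm]
      gbary_num_eq_den_scaleR[OF dn] P_def P'_def Dm_def Dn_def by simp
  also have "\<dots> = X" unfolding \<alpha>\<beta> u by (simp add: algebra_simps)
  finally have Xk: "X = gbary s A1 A2 A3 k1 k2 k3" unfolding gbary_eq_num Dk by simp
  have "\<alpha> \<noteq> 0" using ne u dm unfolding \<alpha>_def P'_def Dm_def by auto
  have "\<alpha> * (\<alpha> * q + \<beta> * B) = circ_quad gamma12 gamma13 gamma23 k1 k2 k3"
    unfolding k1_def k2_def k3_def circ_quad_lincomb qn B_def q_def by (simp add: algebra_simps power2_eq_square)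
  also have "\<dots> = 0" using gbary_on_circumgyrocircle_iff[of k1 k2 k3] Dk X Xk by simp
  finally have \<alpha>q: "\<alpha> * q = - (\<beta> * B)" using \<open>\<alpha> \<noteq> 0\<close> by simp
  have rk: "B * mi - q * ni = (B / \<alpha>) * (\<alpha> * mi + \<beta> * ni)" for mi ni
  proof -
    have "\<alpha> * (B * mi - q * ni) = B * (\<alpha> * mi) - (\<alpha> * q) * ni" by (simp add: algebra_simps)
    also have "\<dots> = B * (\<alpha> * mi + \<beta> * ni)" unfolding \<alpha>q by (simp add: algebra_simps)
    finally show ?thesis using \<open>\<alpha> \<noteq> 0\<close> by (simp add: field_simps)
  qed
  have "B \<noteq> 0" using r rk by auto
  then have "B / \<alpha> \<noteq> 0" using \<open>\<alpha> \<noteq> 0\<close> by simp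
  then show ?thesis
    unfolding rk Xk k1_def[symmetric] k2_def[symmetric] k3_def[symmetric] by (rule gbary_scale[symmetric])
qed

lemma second_intersection_eq_polar_point:
  fixes m1 m2 m3 n1 n2 n3 :: real
  defines "B \<equiv> circ_polar gamma12 gamma13 gamma23 m1 m2 m3 n1 n2 n3"
    and "q \<equiv> circ_quad gamma12 gamma13 gamma23 m1 m2 m3"
  assumes dm: "gbary_den s A1 A2 A3 m1 m2 m3 \<noteq> 0" and dn: "gbary_den s A1 A2 A3 n1 n2 n3 \<noteq> 0"
    and qn: "circ_quad gamma12 gamma13 gamma23 n1 n2 n3 = 0"
    and ne: "gbary s A1 A2 A3 m1 m2 m3 \<noteq> gbary s A1 A2 A3 n1 n2 n3"
    and r: "\<not> (B * m1 - q * n1 = 0 \<and> B * m2 - q * n2 = 0 \<and> B * m3 - q * n3 = 0)"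
    and X: "X \<in> circumgyrocircle s A1 A2 A3 Ctr \<inter>
      gyroline s (gbary s A1 A2 A3 m1 m2 m3) (gbary s A1 A2 A3 n1 n2 n3)"
    and second: "X \<noteq> gbary s A1 A2 A3 n1 n2 n3 \<or>
      circumgyrocircle s A1 A2 A3 Ctr \<inter> gyroline s (gbary s A1 A2 A3 m1 m2 m3) (gbary s A1 A2 A3 n1 n2 n3)
        = {gbary s A1 A2 A3 n1 n2 n3}"
  shows "X = gbary s A1 A2 A3 (B * m1 - q * n1) (B * m2 - q * n2) (B * m3 - q * n3)"
proof (cases "X = gbary s A1 A2 A3 n1 n2 n3")
  case True
  then have "circumgyrocircle s A1 A2 A3 Ctr \<inter> gyroline s (gbary s A1 A2 A3 m1 m2 m3) (gbary s A1 A2 A3 n1 n2 n3)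
    = {X}" using second by simp
  then show ?thesis
    using polar_point_on_circle_and_line[OF dm dn qn ne r[unfolded B_def q_def]] unfolding B_def q_def by auto
next
  case False
  then show ?thesis
    using chord_point_eq_polar_point[OF dm dn qn r[unfolded B_def q_def] X] unfolding B_def q_def by blast
qed

end

theorem mainTheorem14:
  fixes s :: real and A1 A2 A3 Ctr P P' P'' :: "'a::euclidean_space"
    and m1 m2 m3 :: real and t :: ereal
  defines "g12 \<equiv> egamma s (eadd s (- A1) A2)"
      and "g13 \<equiv> egamma s (eadd s (- A1) A3)"
      and "g23 \<equiv> egamma s (eadd s (- A2) A3)"
  assumes s_pos: "s > 0"
    and dim: "DIM('a) \<ge> 2"
    and tri: "gyrotriangle s A1 A2 A3"
    and circ: "circumcentre s A1 A2 A3 Ctr"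
    and P_den: "gbary_den s A1 A2 A3 m1 m2 m3 \<noteq> 0"
    and P_def: "P = gbary s A1 A2 A3 m1 m2 m3"
    and P_in: "P \<in> gyroplane s A1 A2 A3"
    and P'_den: "gbary_den s A1 A2 A3 (mp1 g12 g13 g23 t) (mp2 g12 g13 g23 t) (mp3 g12 g13 g23 t) \<noteq> 0"
    and P'_def: "P' = gbary s A1 A2 A3 (mp1 g12 g13 g23 t) (mp2 g12 g13 g23 t) (mp3 g12 g13 g23 t)"
    and P'_on: "P' \<in> circumgyrocircle s A1 A2 A3 Ctr"
    and P'_ne: "P' \<noteq> P"
    and P''_on: "P'' \<in> circumgyrocircle s A1 A2 A3 Ctr \<inter> gyroline s P P'"
    and P''_second: "P'' \<noteq> P' \<or> circumgyrocircle s A1 A2 A3 Ctr \<inter> gyroline s P P' = {P'}"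
  shows "P'' = gbary s A1 A2 A3
     (E1 g12 g13 g23 m1 m2 m3 t * E2 g12 g13 g23 m1 m2 m3 t)
     (E0 g12 g13 g23 m1 m2 m3 t * E1 g12 g13 g23 m1 m2 m3 t * (g13 - 1))
     (- E0 g12 g13 g23 m1 m2 m3 t * E2 g12 g13 g23 m1 m2 m3 t * (g12 - 1))"
proof -
  interpret circumscribed_gyrotriangle s A1 A2 A3 Ctr
    using s_pos tri circ by unfold_locales
  define n1 n2 n3 where "n1 = mp1 g12 g13 g23 t" and "n2 = mp2 g12 g13 g23 t" and "n3 = mp3 g12 g13 g23 t"
  note gammas = g12_def g13_def g23_def and n = n1_def n2_def n3_def
  have qn: "circ_quad g12 g13 g23 n1 n2 n3 = 0"
    using P'_on gbary_on_circumgyrocircle_iff[OF P'_den] unfolding P'_def n gammas by simp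
  have "\<not> (E1 g12 g13 g23 m1 m2 m3 t * E2 g12 g13 g23 m1 m2 m3 t = 0
    \<and> E0 g12 g13 g23 m1 m2 m3 t * E1 g12 g13 g23 m1 m2 m3 t * (g13 - 1) = 0
    \<and> - E0 g12 g13 g23 m1 m2 m3 t * E2 g12 g13 g23 m1 m2 m3 t * (g12 - 1) = 0)"
    using E_coords_not_all_zero[OF gamma12_ne_1 gamma13_ne_1 gamma23_ne_1 P_den] P'_ne
    unfolding P_def P'_def gammas by auto
  then show ?thesis
    using second_intersection_eq_polar_point[OF P_den P'_den[folded n], folded gammas] qn P'_ne P''_on
      P''_second
    unfolding E_coords_eq_polar_combination P_def P'_def n by auto
qed

end
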